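(* Let $0<\gamma<1$, $\lambda\ge0$, $\tau>0$, $\eta\in\mathbb{R}$, $J=\sqrt{-1}$, and let $\rho,u$ be real with $\rho u\ge0$. Define $l_0^{(2)}=l_0^{2,\gamma}-\left(\sum_{l=1}^{2}\frac1l(1-e^{-\lambda\tau})^l\right)^{\gamma}$ and $l_k^{(2)}=e^{-(\lambda+\rho u)k\tau}l_k^{2,\gamma}$ for $k\ge1$. Then for every positive integer $N$ and every $(v^0,v^1,\dots,v^N)\in\mathbb{C}^{N+1}$, $$\Re\left\{\sum_{n=0}^{N}\left(\sum_{k=0}^{n}l_k^{(2)}e^{-J\eta u k\tau}v^{n-k}\right)\overline{v^n}\right\}\ge0.$$
   Context: The coefficients $l_k^{2,\gamma}$ are defined by $\left((1-\zeta)+\tfrac12(1-\zeta)^2\right)^{\gamma}=\sum_{k=0}^\infty l_k^{2,\gamma}\zeta^k$; equivalently $l_m^{2,\gamma}=(3/2)^{\gamma}\sum_{k=0}^{m}3^{-k}g_k^\gamma g_{m-k}^\gamma$ with $g_k^\gamma=(-1)^k\binom{\gamma}{k}$. (In the paper $u=U(x_i)$ is the value of a potential at a grid point.) *)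

theory Defs
  imports Complex_Main
begin

definition gcoef :: "real \<Rightarrow> nat \<Rightarrow> real" where
  "gcoef \<gamma> k = (-1) ^ k * (\<gamma> gchoose k)"

(* l_m^{2,gamma} = (3/2)^gamma * sum_{k=0}^m 3^{-k} g_k g_{m-k},
   the coefficients of ((1-z) + (1-z)^2/2)^gamma *)
definition lcoef2 :: "real \<Rightarrow> nat \<Rightarrow> real" where
  "lcoef2 \<gamma> m = (3/2) powr \<gamma> * (\<Sum>k=0..m. (1/3) ^ k * gcoef \<gamma> k * gcoef \<gamma> (m - k))"

definition lmod2 :: "real \<Rightarrow> real \<Rightarrow> real \<Rightarrow> real \<Rightarrow> real \<Rightarrow> nat \<Rightarrow> real" where
  "lmod2 \<gamma> lam \<tau> \<rho> u k =
     (if k = 0 then lcoef2 \<gamma> 0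
        - (\<Sum>l=1..(2::nat). (1 / real l) * (1 - exp (- lam * \<tau>)) ^ l) powr \<gamma>
      else exp (- (lam + \<rho> * u) * real k * \<tau>) * lcoef2 \<gamma> k)"

end

(* After absorbing the phase e^(-J eta u k tau) into v, the sum is the Toeplitz form
   sum_n sum_(k<=n) h_k v_(n-k) conj v_n with h_k = r^k l_k - [k = 0] L(q), where
   r = e^(-(lambda + rho u) tau) <= q = e^(-lambda tau) <= 1 and L(s) = ((1-s) + (1-s)^2/2)^gamma.
   For 0 <= s < 1 a discrete Fourier transform of length M > K + N writes the form with
   coefficients s^k l_k (k <= K) as an average over the M-th roots of unity w of the truncated
   symbol sum_(k<=K) l_k (s w)^k weighted by |v^(w)|^2.  The full symbol is
   (3/2)^gamma (1 - z/3)^gamma (1 - z)^gamma, and since Re(a^gamma b^gamma) >= Re(ab)^gamma when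
   Re a, Re b, Re ab > 0, its real part on |z| = s is at least L(s).  Letting K -> infinity and
   then s -> r from below gives Re form(r^k l_k) >= L(r) |v|^2 >= L(q) |v|^2, which is exactly
   the k = 0 correction. *)

theory Submission
  imports Defs "HOL-Analysis.Analysis"
begin

lemma cos_powr_le_cos_mult:
  fixes y g :: real
  assumes "0 \<le> g" "g \<le> 1" "\<bar>y\<bar> \<le> pi/2" "0 < cos y"
  shows "cos y powr g \<le> cos (g * y)"
proof -
  have "convex_on {-pi/2..pi/2} (\<lambda>x. - cos x)"
  proof (rule convex_on_realI[where f' = sin])
    show "connected {-pi/2..pi/2::real}" by simp
    show "((\<lambda>x. - cos x) has_real_derivative sin x) (at x)" for x
      by (auto intro!: derivative_eq_intros)
    show "sin x \<le> sin y" if "x \<in> {-pi/2..pi/2}" "y \<in> {-pi/2..pi/2}" "x \<le> y" for x y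
      using that by (intro sin_monotone_2pi_le) auto
  qed
  then have "- cos ((1 - g) *\<^sub>R 0 + g *\<^sub>R y) \<le> (1 - g) * (- cos 0) + g * (- cos y)"
    by (rule convex_onD) (use assms in auto)
  moreover have "cos y powr g * 1 powr (1 - g) \<le> g * cos y + (1 - g) * 1"
    by (rule Youngs_inequality_0) (use assms in auto)
  ultimately show ?thesis by (simp add: algebra_simps)
qed

text \<open>Both factors have arguments in \<open>(-pi/2, pi/2)\<close>, and \<open>0 < Re (a * b)\<close> forces the
  sum of the arguments into \<open>[-pi/2, pi/2]\<close>, where \<open>cos\<close> is concave.\<close>

lemma Re_mult_powr_le_Re_powr_mult:
  fixes a b :: complex and g :: real
  assumes "0 < Re a" "0 < Re b" "0 < Re (a * b)" "0 \<le> g" "g \<le> 1"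
  shows "Re (a * b) powr g \<le> Re (a powr of_real g * b powr of_real g)"
proof -
  have "a \<noteq> 0" "b \<noteq> 0" using assms by auto
  define w where "w = Ln a + Ln b"
  have ab: "a * b = exp w" using \<open>a \<noteq> 0\<close> \<open>b \<noteq> 0\<close> by (simp add: w_def exp_add)
  have abg: "a powr of_real g * b powr of_real g = exp (of_real g * w)"
    using \<open>a \<noteq> 0\<close> \<open>b \<noteq> 0\<close> by (simp add: powr_def w_def exp_add[symmetric] algebra_simps)
  have "\<bar>Im (Ln a)\<bar> < pi/2" "\<bar>Im (Ln b)\<bar> < pi/2"
    using Re_Ln_pos_lt_imp assms(1,2) by blast+
  then have "\<bar>Im w\<bar> < pi" by (simp add: w_def)
  have cos_pos: "0 < cos (Im w)" using assms(3) by (simp add: ab Re_exp zero_less_mult_iff)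
  have "\<bar>Im w\<bar> \<le> pi/2"
  proof (rule ccontr)
    assume "\<not> ?thesis"
    then have "cos \<bar>Im w\<bar> < 0" using \<open>\<bar>Im w\<bar> < pi\<close> by (intro cos_lt_zero_pi) auto
    then show False using cos_pos by simp
  qed
  have "Re (a * b) powr g = exp (Re w * g) * cos (Im w) powr g"
    using cos_pos by (simp add: ab Re_exp powr_mult exp_powr_real)
  also have "\<dots> \<le> exp (Re w * g) * cos (g * Im w)"
    using cos_powr_le_cos_mult[OF assms(4,5) \<open>\<bar>Im w\<bar> \<le> pi/2\<close> cos_pos] by simp
  also have "\<dots> = Re (a powr of_real g * b powr of_real g)"
    by (simp add: abg Re_exp mult.commute)
  finally show ?thesis .
qed

lemma Re_mult_one_minus_ge:
  fixes z :: complex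
  assumes "norm z < 1"
  shows "(1 - norm z / 3) * (1 - norm z) \<le> Re ((1 - z / 3) * (1 - z))"
proof -
  have "Re ((1 - z / 3) * (1 - z)) - (1 - norm z / 3) * (1 - norm z)
      = (2 * (norm z - Re z) * (2 - norm z - Re z) + ((norm z)\<^sup>2 - (Re z)\<^sup>2 - (Im z)\<^sup>2)) / 3"
    by (simp add: field_simps power2_eq_square)
  also have "(norm z)\<^sup>2 - (Re z)\<^sup>2 - (Im z)\<^sup>2 = 0"
    by (simp add: cmod_power2)
  also have "0 \<le> 2 * (norm z - Re z) * (2 - norm z - Re z)"
    using complex_Re_le_cmod[of z] abs_Re_le_cmod[of z] assms by auto
  ultimately show ?thesis by simp
qed

lemma gcoef_Suc: "gcoef g (Suc k) = gcoef g k * ((real k - g) / (real k + 1))"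
proof -
  have "g * (g gchoose k) = of_nat k * (g gchoose k) + of_nat (Suc k) * (g gchoose (Suc k))"
    by (rule gbinomial_mult_1)
  then have "g gchoose Suc k = (g - real k) * (g gchoose k) / (real k + 1)"
    by (simp add: field_simps)
  then show ?thesis by (simp add: gcoef_def) (simp add: field_simps)
qed

lemma abs_gcoef_le_1:
  assumes "0 \<le> g" "g \<le> 1"
  shows "\<bar>gcoef g k\<bar> \<le> 1"
proof (induction k)
  case 0
  then show ?case by (simp add: gcoef_def)
next
  case (Suc k)
  have "\<bar>(real k - g) / (real k + 1)\<bar> \<le> 1" using assms by (simp add: abs_le_iff field_simps)
  then have "\<bar>gcoef g k\<bar> * \<bar>(real k - g) / (real k + 1)\<bar> \<le> 1 * 1"
    using Suc by (intro mult_mono) auto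
  then show ?case by (simp add: gcoef_Suc abs_mult)
qed

lemma abs_lcoef2_le:
  assumes "0 \<le> g" "g \<le> 1"
  shows "\<bar>lcoef2 g m\<bar> \<le> 9/4"
proof -
  have "\<bar>\<Sum>k=0..m. (1/3) ^ k * gcoef g k * gcoef g (m - k)\<bar> \<le> (\<Sum>k=0..m. (1/3::real) ^ k)"
  proof (rule order_trans[OF sum_abs sum_mono])
    fix k
    have "\<bar>gcoef g k\<bar> * \<bar>gcoef g (m - k)\<bar> \<le> 1 * 1"
      using abs_gcoef_le_1[OF assms] by (intro mult_mono) auto
    then show "\<bar>(1/3) ^ k * gcoef g k * gcoef g (m - k)\<bar> \<le> (1/3::real) ^ k"
      by (simp add: abs_mult mult.assoc mult_left_le)
  qed
  also have "\<dots> = (1 - (1/3)^Suc m) / (1 - 1/3)"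
    using sum_gp_strict[of "1/3::real" "Suc m"] by (simp add: atLeast0AtMost lessThan_Suc_atMost)
  also have "\<dots> \<le> 3/2" by simp
  finally have "\<bar>\<Sum>k=0..m. (1/3) ^ k * gcoef g k * gcoef g (m - k)\<bar> \<le> 3/2" .
  moreover have "(3/2::real) powr g \<le> 3/2"
    using powr_mono[of g 1 "3/2::real"] assms by simp
  ultimately have "(3/2) powr g * \<bar>\<Sum>k=0..m. (1/3) ^ k * gcoef g k * gcoef g (m - k)\<bar> \<le> 3/2 * (3/2)"
    by (intro mult_mono) auto
  then show ?thesis by (simp add: lcoef2_def abs_mult)
qed

lemma of_real_gbinomial: "(of_real a gchoose n :: 'a :: real_field) = of_real (a gchoose n)"
  by (simp add: gbinomial_prod_rev of_real_prod)

lemma gcoef_sums: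
  fixes z :: complex
  assumes "norm z < 1"
  shows "(\<lambda>k. of_real (gcoef g k) * z ^ k) sums ((1 - z) powr of_real g)"
proof -
  have "of_real (gcoef g k) * z ^ k = (of_real g gchoose k) * (- z) ^ k" for k
    unfolding gcoef_def of_real_mult of_real_gbinomial power_minus[of z] of_real_power
      of_real_minus of_real_1
    by (simp only: mult_ac)
  then show ?thesis using gen_binomial_complex[of "- z" "of_real g"] assms by simp
qed

text \<open>The Cauchy product of the binomial series of \<open>(1 - z/3)^g\<close> and \<open>(1 - z)^g\<close>.\<close>

lemma lcoef2_sums:
  fixes z :: complex
  assumes "norm z < 1" "0 \<le> g" "g \<le> 1"
  shows "(\<lambda>k. of_real (lcoef2 g k) * z ^ k) sums
           (of_real ((3/2) powr g) * ((1 - z/3) powr of_real g * (1 - z) powr of_real g))"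
proof -
  define A where "A = (\<lambda>i. of_real (gcoef g i) * z ^ i)"
  define B where "B = (\<lambda>i. of_real ((1/3) ^ i * gcoef g i) * z ^ i)"
  have "norm (z/3) < 1" using assms(1) by (simp add: norm_divide)
  have B_eq: "B = (\<lambda>i. of_real (gcoef g i) * (z/3) ^ i)"
    by (auto simp: B_def power_divide)
  have summable_bound: "summable (\<lambda>k. norm (of_real (gcoef g k) * w ^ k))" if "norm w < 1" for w :: complex
  proof (rule summable_comparison_test)
    show "\<exists>N. \<forall>n\<ge>N. norm (norm (of_real (gcoef g n) * w ^ n)) \<le> norm w ^ n"
      using abs_gcoef_le_1[OF assms(2,3)]
      by (auto simp: norm_mult norm_power intro!: mult_left_le_one_le)
    show "summable (\<lambda>n. norm w ^ n)" using that by simp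
  qed
  have "(\<lambda>k. \<Sum>i\<le>k. B i * A (k - i)) sums (suminf B * suminf A)"
    using summable_bound[OF \<open>norm (z/3) < 1\<close>] summable_bound[OF assms(1)]
    unfolding A_def B_eq by (rule Cauchy_product_sums)
  moreover have "suminf B * suminf A = (1 - z/3) powr of_real g * (1 - z) powr of_real g"
    using gcoef_sums[OF assms(1)] gcoef_sums[OF \<open>norm (z/3) < 1\<close>]
    by (simp add: sums_iff A_def B_eq)
  moreover have "(\<Sum>i\<le>k. B i * A (k - i)) =
      of_real (\<Sum>i=0..k. (1/3) ^ i * gcoef g i * gcoef g (k - i)) * z ^ k" for k
  proof -
    have "B i * A (k - i) = of_real ((1/3) ^ i * gcoef g i * gcoef g (k - i)) * z ^ k" if "i \<le> k" for i
      using that by (simp add: A_def B_def mult_ac power_add[symmetric])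
    then show ?thesis by (simp add: sum_distrib_right atLeast0AtMost)
  qed
  ultimately have "(\<lambda>k. of_real (\<Sum>i=0..k. (1/3) ^ i * gcoef g i * gcoef g (k - i)) * z ^ k)
      sums ((1 - z/3) powr of_real g * (1 - z) powr of_real g)" by simp
  from sums_mult[OF this, of "of_real ((3/2) powr g)"] show ?thesis
    by (simp add: lcoef2_def mult_ac)
qed

text \<open>The generating function \<open>((1 - \<zeta>) + (1 - \<zeta>)\<^sup>2/2)\<^sup>g\<close> of \<open>lcoef2 g\<close> at a real point.\<close>

definition lgen2 :: "real \<Rightarrow> real \<Rightarrow> real" where
  "lgen2 g s = ((1 - s) + (1 - s)\<^sup>2 / 2) powr g"

lemma lgen2_antimono:
  assumes "0 \<le> g" "s \<le> t" "t \<le> 1"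
  shows "lgen2 g t \<le> lgen2 g s"
  unfolding lgen2_def
proof (rule powr_mono2)
  show "(1 - t) + (1 - t)\<^sup>2 / 2 \<le> (1 - s) + (1 - s)\<^sup>2 / 2"
    using assms by (intro add_mono divide_right_mono power_mono) auto
qed (use assms in auto)

lemma lgen2_le_Re_generating_function:
  fixes z :: complex
  assumes "norm z < 1" "0 \<le> g" "g \<le> 1"
  shows "lgen2 g (norm z) \<le> Re (of_real ((3/2) powr g) * ((1 - z/3) powr of_real g * (1 - z) powr of_real g))"
proof -
  let ?s = "norm z"
  have pos: "0 < (1 - ?s/3) * (1 - ?s)" using assms by simp
  have "lgen2 g ?s = ((3/2) * ((1 - ?s/3) * (1 - ?s))) powr g"
    unfolding lgen2_def by (rule arg_cong[where f = "\<lambda>x. x powr g"]) (simp add: field_simps power2_eq_square)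
  also have "\<dots> = (3/2) powr g * ((1 - ?s/3) * (1 - ?s)) powr g"
    by (rule powr_mult)
  also have "\<dots> \<le> (3/2) powr g * Re ((1 - z/3) * (1 - z)) powr g"
    using Re_mult_one_minus_ge[OF assms(1)] pos assms(2) by (intro mult_left_mono powr_mono2) auto
  also have "\<dots> \<le> (3/2) powr g * Re ((1 - z/3) powr of_real g * (1 - z) powr of_real g)"
  proof (intro mult_left_mono Re_mult_powr_le_Re_powr_mult)
    show "0 < Re (1 - z/3)" "0 < Re (1 - z)"
      using complex_Re_le_cmod[of z] assms(1) by simp_all
    show "0 < Re ((1 - z/3) * (1 - z))"
      using Re_mult_one_minus_ge[OF assms(1)] pos by linarith
  qed (use assms in auto)
  finally show ?thesis by simp
qed

text \<open>The tail of the series is bounded termwise by \<open>9/4 * s\<^sup>k\<close>.\<close>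

lemma Re_lcoef2_partial_sum_ge:
  fixes z :: complex
  assumes "norm z < 1" "0 \<le> g" "g \<le> 1"
  shows "lgen2 g (norm z) - 9/4 * norm z ^ n / (1 - norm z) \<le> Re (\<Sum>k<n. of_real (lcoef2 g k) * z ^ k)"
proof -
  let ?s = "norm z"
  define S where "S = of_real ((3/2) powr g) * ((1 - z/3) powr of_real g * (1 - z) powr of_real g)"
  have tail: "(\<lambda>i. of_real (lcoef2 g (i + n)) * z ^ (i + n)) sums (S - (\<Sum>k<n. of_real (lcoef2 g k) * z ^ k))"
    unfolding S_def by (rule sums_split_initial_segment[OF lcoef2_sums[OF assms]])
  have geom: "(\<lambda>i. 9/4 * ?s ^ n * ?s ^ i) sums (9/4 * ?s ^ n * (1 / (1 - ?s)))"
    by (intro sums_mult geometric_sums) (use assms in auto)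
  have "norm (S - (\<Sum>k<n. of_real (lcoef2 g k) * z ^ k)) \<le> (\<Sum>i. 9/4 * ?s ^ n * ?s ^ i)"
    unfolding sums_unique[OF tail]
  proof (rule norm_suminf_le)
    show "norm (of_real (lcoef2 g (i + n)) * z ^ (i + n)) \<le> 9/4 * ?s ^ n * ?s ^ i" for i
      using mult_right_mono[OF abs_lcoef2_le[OF assms(2,3), of "i + n"], of "?s ^ (i + n)"]
      by (simp add: norm_mult norm_power power_add mult_ac)
    show "summable (\<lambda>i. 9/4 * ?s ^ n * ?s ^ i)" using geom by (rule sums_summable)
  qed
  also have "\<dots> = 9/4 * ?s ^ n / (1 - ?s)" using sums_unique[OF geom] by simp
  finally have "Re S - Re (\<Sum>k<n. of_real (lcoef2 g k) * z ^ k) \<le> 9/4 * ?s ^ n / (1 - ?s)"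
    using abs_Re_le_cmod[of "S - (\<Sum>k<n. of_real (lcoef2 g k) * z ^ k)"] by simp
  then show ?thesis
    using lgen2_le_Re_generating_function[OF assms] by (simp add: S_def)
qed

lemma power_mult_cnj_power_of_norm_1:
  fixes z :: complex
  assumes "norm z = 1" "b \<le> a"
  shows "z ^ a * cnj (z ^ b) = z ^ (a - b)"
proof -
  have "z ^ b * cnj (z ^ b) = 1"
    using complex_norm_square[of "z ^ b"] assms(1) by (simp add: norm_power)
  then show ?thesis
    using assms(2) by (metis le_add_diff_inverse2 mult.assoc mult_1_right power_add)
qed

lemma sum_root_unity_powers_eq_0:
  fixes w :: "'a :: field"
  assumes "w \<noteq> 1" "w ^ M = 1"
  shows "(\<Sum>j<M. w ^ j) = 0"
  using assms by (simp add: sum_gp_strict)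

lemma sum_cis_root_powers:
  assumes "d < M"
  shows "(\<Sum>j<M. (cis (2 * pi / M) ^ d) ^ j) = (if d = 0 then of_nat M else 0)"
proof (cases "d = 0")
  case False
  let ?w = "cis (2 * pi / M) ^ d"
  have w: "?w = cis (2 * pi * real d / real M)"
    unfolding Complex.DeMoivre by (rule arg_cong[where f = cis]) simp
  have "?w \<noteq> 1"
  proof
    assume "?w = 1"
    then have eq: "(\<lambda>k. cis (2 * pi * real k / real M)) d = (\<lambda>k. cis (2 * pi * real k / real M)) 0"
      by (simp add: w)
    have inj: "inj_on (\<lambda>k. cis (2 * pi * real k / real M)) {..<M}"
      using Complex.bij_betw_roots_unity[of M] assms by (simp add: bij_betw_def)
    have "d = 0" using inj_onD[OF inj eq] assms by simp
    then show False using False by simp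
  qed
  moreover have "?w ^ M = cis (2 * pi * real d)"
    unfolding power_mult[symmetric] Complex.DeMoivre using assms
    by (intro arg_cong[where f = cis]) simp
  then have "?w ^ M = 1" by simp
  ultimately show ?thesis using sum_root_unity_powers_eq_0 False by simp
qed simp

lemma sum_cis_root_orthogonal:
  assumes "a < M" "b < M"
  shows "(\<Sum>j<M. cis (2 * pi / M) ^ (j * a) * cnj (cis (2 * pi / M) ^ (j * b)))
       = (if a = b then of_nat M else 0)"
proof -
  let ?w = "cis (2 * pi / M)"
  have half: "(\<Sum>j<M. ?w ^ (j * a) * cnj (?w ^ (j * b))) = (if a = b then of_nat M else 0)"
    if "b \<le> a" "a < M" for a b
  proof -
    have "?w ^ (j * a) * cnj (?w ^ (j * b)) = (?w ^ j) ^ a * cnj ((?w ^ j) ^ b)" for j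
      by (simp only: power_mult)
    also have "\<dots> j = (?w ^ j) ^ (a - b)" for j
      by (rule power_mult_cnj_power_of_norm_1) (simp_all add: norm_power that)
    also have "\<dots> j = (?w ^ (a - b)) ^ j" for j
      by (simp only: power_mult[symmetric] mult.commute)
    finally have "?w ^ (j * a) * cnj (?w ^ (j * b)) = (?w ^ (a - b)) ^ j" for j .
    then show ?thesis using sum_cis_root_powers[of "a - b" M] that by simp
  qed
  show ?thesis
  proof (cases "b \<le> a")
    case True
    then show ?thesis using half assms by simp
  next
    case False
    have "(\<Sum>j<M. ?w ^ (j * a) * cnj (?w ^ (j * b))) = cnj (\<Sum>j<M. ?w ^ (j * b) * cnj (?w ^ (j * a)))"
      by (simp add: mult.commute)
    also have "\<dots> = 0" using half[of a b] False assms by simp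
    finally show ?thesis using False by simp
  qed
qed

definition toeplitz_form :: "(nat \<Rightarrow> complex) \<Rightarrow> (nat \<Rightarrow> complex) \<Rightarrow> nat \<Rightarrow> complex" where
  "toeplitz_form h y N = (\<Sum>n\<le>N. \<Sum>k\<le>n. h k * y (n - k) * cnj (y n))"

lemma toeplitz_form_diff:
  "toeplitz_form (\<lambda>k. h k - h' k) y N = toeplitz_form h y N - toeplitz_form h' y N"
  by (simp add: toeplitz_form_def algebra_simps sum_subtractf)

lemma toeplitz_form_unit:
  "toeplitz_form (\<lambda>k. if k = 0 then c else 0) y N = c * of_real (\<Sum>n\<le>N. (cmod (y n))\<^sup>2)"
proof -
  have "(\<Sum>k\<le>n. (if k = 0 then c else 0) * y (n - k) * cnj (y n)) = c * (y n * cnj (y n))" for n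
    by (simp add: if_distrib[where f = "\<lambda>x. x * _"] sum.delta mult.assoc cong: if_cong)
  then show ?thesis
    by (simp only: toeplitz_form_def of_real_sum complex_norm_square sum_distrib_left)
qed

lemma toeplitz_form_modulate:
  "toeplitz_form (\<lambda>k. h k * cis (- (\<phi> * real k))) v N = toeplitz_form h (\<lambda>n. v n * cis (\<phi> * real n)) N"
proof -
  have "cis (- (\<phi> * real k)) = cis (\<phi> * real (n - k)) * cnj (cis (\<phi> * real n))" if "k \<le> n" for k n
    unfolding cis_cnj cis_mult using that by (intro arg_cong[where f = cis]) (simp add: algebra_simps)
  then show ?thesis
    unfolding toeplitz_form_def by (intro sum.cong refl) (simp add: mult_ac)
qed

lemma sum_triple_if_add_eq:
  fixes F :: "nat \<Rightarrow> nat \<Rightarrow> nat \<Rightarrow> 'a :: comm_monoid_add"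
  assumes "N \<le> K"
  shows "(\<Sum>k\<le>K. \<Sum>m\<le>N. \<Sum>n\<le>N. if k + m = n then F k m n else 0) = (\<Sum>n\<le>N. \<Sum>k\<le>n. F k (n - k) n)"
proof -
  have "(\<Sum>k\<le>K. \<Sum>m\<le>N. \<Sum>n\<le>N. if k + m = n then F k m n else 0)
      = (\<Sum>n\<le>N. \<Sum>k\<le>K. \<Sum>m\<le>N. if k + m = n then F k m n else 0)"
    by (subst sum.swap, rule sum.cong[OF refl], subst sum.swap) (rule refl)
  also have "\<dots> = (\<Sum>n\<le>N. \<Sum>k\<le>K. if k \<le> n then F k (n - k) n else 0)"
  proof (intro sum.cong refl)
    fix n k assume "n \<in> {..N}"
    then have "(\<Sum>m\<le>N. if k + m = n then F k m n else 0) = (\<Sum>m\<le>N. if m = n - k \<and> k \<le> n then F k m n else 0)"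
      by (intro sum.cong refl) auto
    also have "\<dots> = (if k \<le> n then F k (n - k) n else 0)"
      using \<open>n \<in> {..N}\<close> by (cases "k \<le> n") auto
    finally show "(\<Sum>m\<le>N. if k + m = n then F k m n else 0) = (if k \<le> n then F k (n - k) n else 0)" .
  qed
  also have "\<dots> = (\<Sum>n\<le>N. \<Sum>k\<le>n. F k (n - k) n)"
  proof (rule sum.cong[OF refl])
    fix n assume "n \<in> {..N}"
    then have "{k \<in> {..K}. k \<le> n} = {..n}" using assms by auto
    then show "(\<Sum>k\<le>K. if k \<le> n then F k (n - k) n else 0) = (\<Sum>k\<le>n. F k (n - k) n)"
      by (simp add: sum.inter_filter[symmetric])
  qed
  finally show ?thesis .
qed

lemma sum_product_three:
  fixes a b c :: "_ \<Rightarrow> 'a :: comm_semiring_0"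
  shows "sum a A * sum b B * sum c C = (\<Sum>k\<in>A. \<Sum>m\<in>B. \<Sum>n\<in>C. a k * b m * c n)"
proof -
  have "sum a A * sum b B * sum c C = (\<Sum>k\<in>A. a k * (sum b B * sum c C))"
    by (simp add: sum_distrib_right mult.assoc)
  also have "\<dots> = (\<Sum>k\<in>A. \<Sum>m\<in>B. \<Sum>n\<in>C. a k * b m * c n)"
    unfolding sum_product by (simp only: sum_distrib_left mult.assoc)
  finally show ?thesis .
qed

text \<open>Discrete Fourier transform with \<open>M > K + N\<close> points: no wrap-around occurs, so the
  transformed products recover the form exactly.\<close>

lemma toeplitz_form_dft:
  fixes h y :: "nat \<Rightarrow> complex"
  assumes "N \<le> K" "K + N < M"
  defines "w \<equiv> cis (2 * pi / M)"
  shows "(\<Sum>j<M. (\<Sum>k\<le>K. h k * w ^ (j * k)) * (\<Sum>m\<le>N. y m * w ^ (j * m))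
                  * cnj (\<Sum>n\<le>N. y n * w ^ (j * n)))
         = of_nat M * toeplitz_form h y N"
proof -
  let ?c = "\<lambda>j k m n. h k * y m * cnj (y n) * (w ^ (j * (k + m)) * cnj (w ^ (j * n)))"
  have "(\<Sum>k\<le>K. h k * w ^ (j * k)) * (\<Sum>m\<le>N. y m * w ^ (j * m)) * cnj (\<Sum>n\<le>N. y n * w ^ (j * n))
      = (\<Sum>k\<le>K. \<Sum>m\<le>N. \<Sum>n\<le>N. h k * w ^ (j * k) * (y m * w ^ (j * m)) * cnj (y n * w ^ (j * n)))"
    for j unfolding cnj_sum by (rule sum_product_three)
  also have "\<dots> j = (\<Sum>k\<le>K. \<Sum>m\<le>N. \<Sum>n\<le>N. ?c j k m n)" for j
    by (intro sum.cong refl) (simp add: power_add add_mult_distrib2 mult_ac)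
  finally have "(\<Sum>k\<le>K. h k * w ^ (j * k)) * (\<Sum>m\<le>N. y m * w ^ (j * m)) * cnj (\<Sum>n\<le>N. y n * w ^ (j * n))
      = (\<Sum>k\<le>K. \<Sum>m\<le>N. \<Sum>n\<le>N. ?c j k m n)" for j .
  then have "(\<Sum>j<M. (\<Sum>k\<le>K. h k * w ^ (j * k)) * (\<Sum>m\<le>N. y m * w ^ (j * m))
                  * cnj (\<Sum>n\<le>N. y n * w ^ (j * n)))
      = (\<Sum>k\<le>K. \<Sum>m\<le>N. \<Sum>n\<le>N. \<Sum>j<M. ?c j k m n)"
    by (simp add: sum.swap[of _ "{..<M}"])
  also have "\<dots> = (\<Sum>k\<le>K. \<Sum>m\<le>N. \<Sum>n\<le>N. if k + m = n then of_nat M * (h k * y m * cnj (y n)) else 0)"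
  proof (intro sum.cong refl)
    fix k m n assume "k \<in> {..K}" "m \<in> {..N}" "n \<in> {..N}"
    then have "k + m < M" "n < M" using assms by auto
    then show "(\<Sum>j<M. ?c j k m n) = (if k + m = n then of_nat M * (h k * y m * cnj (y n)) else 0)"
      using sum_cis_root_orthogonal[of "k + m" M n] by (simp add: w_def sum_distrib_left[symmetric] mult.commute)
  qed
  also have "\<dots> = of_nat M * toeplitz_form h y N"
    by (subst sum_triple_if_add_eq[OF assms(1)]) (simp add: toeplitz_form_def sum_distrib_left)
  finally show ?thesis .
qed

lemma Re_toeplitz_form_lcoef2_ge_truncated:
  fixes y :: "nat \<Rightarrow> complex"
  assumes "0 \<le> g" "g \<le> 1" "0 \<le> s" "s < 1" "N \<le> K"
  shows "(lgen2 g s - 9/4 * s ^ Suc K / (1 - s)) * (\<Sum>n\<le>N. (cmod (y n))\<^sup>2)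
           \<le> Re (toeplitz_form (\<lambda>k. of_real (s ^ k * lcoef2 g k)) y N)"
proof -
  define M where "M = K + N + 1"
  define w where "w = cis (2 * pi / M)"
  define Y where "Y j = (\<Sum>m\<le>N. y m * w ^ (j * m))" for j
  define P where "P j = (\<Sum>k\<le>K. of_real (s ^ k * lcoef2 g k) * w ^ (j * k))" for j
  define \<epsilon> where "\<epsilon> = lgen2 g s - 9/4 * s ^ Suc K / (1 - s)"
  define E where "E = (\<Sum>n\<le>N. (cmod (y n))\<^sup>2)"
  have "N \<le> K" "K + N < M" using assms(5) by (auto simp: M_def)
  have parseval: "(\<Sum>j<M. (cmod (Y j))\<^sup>2) = real M * E"
  proof -
    have "(\<Sum>j<M. (\<Sum>k\<le>K. (if k = 0 then 1 else 0) * w ^ (j * k)) * Y j * cnj (Y j))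
        = of_nat M * toeplitz_form (\<lambda>k. if k = 0 then 1 else 0) y N"
      unfolding Y_def w_def by (rule toeplitz_form_dft[OF \<open>N \<le> K\<close> \<open>K + N < M\<close>])
    moreover have "(\<Sum>k\<le>K. (if k = 0 then 1 else 0) * w ^ (j * k)) = 1" for j
      by (simp add: if_distrib[where f = "\<lambda>x. x * _"] cong: if_cong)
    ultimately have "of_real (\<Sum>j<M. (cmod (Y j))\<^sup>2) = of_nat M * toeplitz_form (\<lambda>k. if k = 0 then 1 else 0) y N"
      by (simp only: of_real_sum complex_norm_square mult_1_left)
    also have "\<dots> = of_real (real M * E)" by (simp add: toeplitz_form_unit E_def)
    finally show ?thesis by (simp only: of_real_eq_iff)
  qed
  have Re_P: "\<epsilon> \<le> Re (P j)" for j
  proof -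
    define z where "z = of_real s * w ^ j"
    have "norm z = s" using assms(3) by (simp add: z_def w_def norm_mult norm_power)
    have "P j = (\<Sum>k<Suc K. of_real (lcoef2 g k) * z ^ k)"
      unfolding P_def lessThan_Suc_atMost
      by (intro sum.cong refl) (simp add: z_def power_mult_distrib power_mult)
    then show ?thesis
      using Re_lcoef2_partial_sum_ge[of z g "Suc K"] assms \<open>norm z = s\<close> by (simp add: \<epsilon>_def)
  qed
  have "real M * Re (toeplitz_form (\<lambda>k. of_real (s ^ k * lcoef2 g k)) y N) = (\<Sum>j<M. Re (P j) * (cmod (Y j))\<^sup>2)"
  proof -
    have "(\<Sum>j<M. P j * Y j * cnj (Y j)) = of_nat M * toeplitz_form (\<lambda>k. of_real (s ^ k * lcoef2 g k)) y N"
      unfolding P_def Y_def w_def by (rule toeplitz_form_dft[OF \<open>N \<le> K\<close> \<open>K + N < M\<close>])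
    moreover have "P j * Y j * cnj (Y j) = P j * of_real ((cmod (Y j))\<^sup>2)" for j
      by (simp only: complex_norm_square mult.assoc)
    ultimately have eq: "of_nat M * toeplitz_form (\<lambda>k. of_real (s ^ k * lcoef2 g k)) y N
        = (\<Sum>j<M. P j * of_real ((cmod (Y j))\<^sup>2))" by simp
    have "real M * Re (toeplitz_form (\<lambda>k. of_real (s ^ k * lcoef2 g k)) y N)
        = Re (of_nat M * toeplitz_form (\<lambda>k. of_real (s ^ k * lcoef2 g k)) y N)" by simp
    also have "\<dots> = Re (\<Sum>j<M. P j * of_real ((cmod (Y j))\<^sup>2))" by (simp only: eq)
    also have "\<dots> = (\<Sum>j<M. Re (P j) * (cmod (Y j))\<^sup>2)" by (simp del: of_real_power)
    finally show ?thesis .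
  qed
  also have "\<dots> \<ge> (\<Sum>j<M. \<epsilon> * (cmod (Y j))\<^sup>2)"
    by (intro sum_mono mult_right_mono Re_P) auto
  finally have "real M * (\<epsilon> * E) \<le> real M * Re (toeplitz_form (\<lambda>k. of_real (s ^ k * lcoef2 g k)) y N)"
    by (simp add: sum_distrib_left[symmetric] parseval mult_ac)
  then show ?thesis by (simp add: M_def \<epsilon>_def E_def)
qed

lemma Re_toeplitz_form_lcoef2_ge_lt1:
  fixes y :: "nat \<Rightarrow> complex"
  assumes "0 \<le> g" "g \<le> 1" "0 \<le> s" "s < 1"
  shows "lgen2 g s * (\<Sum>n\<le>N. (cmod (y n))\<^sup>2) \<le> Re (toeplitz_form (\<lambda>k. of_real (s ^ k * lcoef2 g k)) y N)"
proof (rule LIMSEQ_le_const2)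
  have "(\<lambda>K. s ^ (K + Suc N)) \<longlonglongrightarrow> 0"
    by (rule LIMSEQ_ignore_initial_segment[OF LIMSEQ_power_zero]) (use assms in simp)
  then have "(\<lambda>K. s ^ Suc (K + N)) \<longlonglongrightarrow> 0" by simp
  then have "(\<lambda>K. (lgen2 g s - 9/4 * s ^ Suc (K + N) / (1 - s)) * (\<Sum>n\<le>N. (cmod (y n))\<^sup>2))
      \<longlonglongrightarrow> (lgen2 g s - 9/4 * 0 / (1 - s)) * (\<Sum>n\<le>N. (cmod (y n))\<^sup>2)"
    by (intro tendsto_intros) (use assms in auto)
  then show "(\<lambda>K. (lgen2 g s - 9/4 * s ^ Suc (K + N) / (1 - s)) * (\<Sum>n\<le>N. (cmod (y n))\<^sup>2))
      \<longlonglongrightarrow> lgen2 g s * (\<Sum>n\<le>N. (cmod (y n))\<^sup>2)"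
    by simp
  show "\<exists>N0. \<forall>K\<ge>N0. (lgen2 g s - 9/4 * s ^ Suc (K + N) / (1 - s)) * (\<Sum>n\<le>N. (cmod (y n))\<^sup>2)
      \<le> Re (toeplitz_form (\<lambda>k. of_real (s ^ k * lcoef2 g k)) y N)"
    using Re_toeplitz_form_lcoef2_ge_truncated[OF assms] by auto
qed

text \<open>The case \<open>s = 1\<close> follows by letting \<open>t \<rightarrow> s\<close> from below: the form is a polynomial in \<open>t\<close>,
  and \<open>lgen2 g\<close> is antitone, so no continuity of \<open>lgen2 g\<close> is needed.\<close>

lemma Re_toeplitz_form_lcoef2_ge:
  fixes y :: "nat \<Rightarrow> complex"
  assumes "0 \<le> g" "g \<le> 1" "0 \<le> s" "s \<le> 1"
  shows "lgen2 g s * (\<Sum>n\<le>N. (cmod (y n))\<^sup>2) \<le> Re (toeplitz_form (\<lambda>k. of_real (s ^ k * lcoef2 g k)) y N)"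
proof (rule LIMSEQ_le_const)
  define e where "e m = inverse (real m + 2)" for m
  define t where "t m = s * (1 - e m)" for m
  have "e \<longlonglongrightarrow> 0"
    using LIMSEQ_ignore_initial_segment[OF LIMSEQ_inverse_real_of_nat, of 1]
    unfolding e_def[abs_def] by (simp add: ac_simps)
  then have "t \<longlonglongrightarrow> s * (1 - 0)"
    unfolding t_def by (intro tendsto_intros)
  then have "t \<longlonglongrightarrow> s" by simp
  then show "(\<lambda>m. Re (toeplitz_form (\<lambda>k. of_real (t m ^ k * lcoef2 g k)) y N))
      \<longlonglongrightarrow> Re (toeplitz_form (\<lambda>k. of_real (s ^ k * lcoef2 g k)) y N)"
    unfolding toeplitz_form_def by (intro tendsto_intros)
  show "\<exists>N0. \<forall>m\<ge>N0. lgen2 g s * (\<Sum>n\<le>N. (cmod (y n))\<^sup>2)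
      \<le> Re (toeplitz_form (\<lambda>k. of_real (t m ^ k * lcoef2 g k)) y N)"
  proof (intro exI allI impI)
    fix m :: nat
    have "0 < e m" "e m \<le> 1" by (simp_all add: e_def field_simps)
    have "t m \<le> 1 - e m"
      unfolding t_def using \<open>e m \<le> 1\<close> assms by (intro mult_left_le_one_le) auto
    then have "t m < 1" using \<open>0 < e m\<close> by linarith
    have "t m \<le> s * 1"
      unfolding t_def using \<open>0 < e m\<close> assms by (intro mult_left_mono) auto
    then have "t m \<le> s" by simp
    have "0 \<le> t m" unfolding t_def using \<open>e m \<le> 1\<close> assms by simp
    then have "lgen2 g s * (\<Sum>n\<le>N. (cmod (y n))\<^sup>2) \<le> lgen2 g (t m) * (\<Sum>n\<le>N. (cmod (y n))\<^sup>2)"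
      using assms \<open>t m \<le> s\<close> by (intro mult_right_mono lgen2_antimono sum_nonneg) auto
    also have "\<dots> \<le> Re (toeplitz_form (\<lambda>k. of_real (t m ^ k * lcoef2 g k)) y N)"
      using Re_toeplitz_form_lcoef2_ge_lt1 assms \<open>0 \<le> t m\<close> \<open>t m < 1\<close> by blast
    finally show "lgen2 g s * (\<Sum>n\<le>N. (cmod (y n))\<^sup>2)
      \<le> Re (toeplitz_form (\<lambda>k. of_real (t m ^ k * lcoef2 g k)) y N)" .
  qed
qed

lemma lmod2_eq:
  "lmod2 g lam \<tau> \<rho> u k
     = exp (- (lam + \<rho> * u) * \<tau>) ^ k * lcoef2 g k - (if k = 0 then lgen2 g (exp (- lam * \<tau>)) else 0)"
proof (cases "k = 0")
  case True
  then show ?thesis by (simp add: lmod2_def lgen2_def numeral_2_eq_2)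
next
  case False
  have "exp (- (lam + \<rho> * u) * real k * \<tau>) = exp (- (lam + \<rho> * u) * \<tau>) ^ k"
    unfolding exp_of_nat_mult[symmetric] by (simp add: mult_ac)
  then show ?thesis using False by (simp add: lmod2_def)
qed

lemma toeplitz_form_lmod2:
  "toeplitz_form (\<lambda>k. of_real (lmod2 g lam \<tau> \<rho> u k)) y N
     = toeplitz_form (\<lambda>k. of_real (exp (- (lam + \<rho> * u) * \<tau>) ^ k * lcoef2 g k)) y N
       - of_real (lgen2 g (exp (- lam * \<tau>)) * (\<Sum>n\<le>N. (cmod (y n))\<^sup>2))"
  using toeplitz_form_diff[of "\<lambda>k. of_real (exp (- (lam + \<rho> * u) * \<tau>) ^ k * lcoef2 g k)"
      "\<lambda>k. if k = 0 then of_real (lgen2 g (exp (- lam * \<tau>))) else 0"]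
  by (simp add: lmod2_eq toeplitz_form_unit if_distrib[of of_real] cong: if_cong)

lemma sum_convolution_eq_toeplitz_form:
  "(\<Sum>n=0..N. (\<Sum>k=0..n. h k * y (n - k)) * cnj (y n)) = toeplitz_form h y N"
  by (simp add: toeplitz_form_def atLeast0AtMost sum_distrib_right)

theorem lemma3p7:
  fixes \<gamma> lam \<tau> \<eta> \<rho> u :: real and N :: nat and v :: "nat \<Rightarrow> complex"
  assumes "0 < \<gamma>" "\<gamma> < 1" "0 \<le> lam" "0 < \<tau>" "0 \<le> \<rho> * u" "1 \<le> N"
  shows "0 \<le> Re (\<Sum>n=0..N. (\<Sum>k=0..n. complex_of_real (lmod2 \<gamma> lam \<tau> \<rho> u k)
            * exp (- \<i> * complex_of_real (\<eta> * u * real k * \<tau>)) * v (n - k)) * cnj (v n))"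
proof -
  define r where "r = exp (- (lam + \<rho> * u) * \<tau>)"
  define q where "q = exp (- lam * \<tau>)"
  define y where "y n = v n * cis (\<eta> * u * \<tau> * real n)" for n
  define E where "E = (\<Sum>n\<le>N. (cmod (y n))\<^sup>2)"
  have "0 \<le> r" "q \<le> 1" using assms(3,4) by (simp_all add: r_def q_def)
  have "0 \<le> \<rho> * u * \<tau>" using assms(4,5) by simp
  then have "r \<le> q" by (simp add: r_def q_def algebra_simps)
  have phase: "exp (- \<i> * complex_of_real (\<eta> * u * real k * \<tau>)) = cis (- (\<eta> * u * \<tau> * real k))" for k
    by (simp add: cis_conv_exp mult_ac)
  have "(\<Sum>n=0..N. (\<Sum>k=0..n. complex_of_real (lmod2 \<gamma> lam \<tau> \<rho> u k)
            * exp (- \<i> * complex_of_real (\<eta> * u * real k * \<tau>)) * v (n - k)) * cnj (v n))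
      = toeplitz_form (\<lambda>k. of_real (lmod2 \<gamma> lam \<tau> \<rho> u k) * cis (- (\<eta> * u * \<tau> * real k))) v N"
    unfolding phase by (rule sum_convolution_eq_toeplitz_form)
  also have "\<dots> = toeplitz_form (\<lambda>k. of_real (lmod2 \<gamma> lam \<tau> \<rho> u k)) y N"
    unfolding y_def by (rule toeplitz_form_modulate)
  also have "\<dots> = toeplitz_form (\<lambda>k. of_real (r ^ k * lcoef2 \<gamma> k)) y N - of_real (lgen2 \<gamma> q * E)"
    unfolding toeplitz_form_lmod2 r_def q_def E_def ..
  moreover have "lgen2 \<gamma> q * E \<le> lgen2 \<gamma> r * E"
    using assms \<open>r \<le> q\<close> \<open>q \<le> 1\<close> by (intro mult_right_mono lgen2_antimono) (auto simp: E_def intro: sum_nonneg)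
  moreover have "lgen2 \<gamma> r * E \<le> Re (toeplitz_form (\<lambda>k. of_real (r ^ k * lcoef2 \<gamma> k)) y N)"
    unfolding E_def using assms \<open>0 \<le> r\<close> \<open>r \<le> q\<close> \<open>q \<le> 1\<close> by (intro Re_toeplitz_form_lcoef2_ge) auto
  ultimately show ?thesis by simp
qed

end
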